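(* Consider Algorithm iR2N (described in the context) and suppose (A4) holds. Then for every iteration $k$, $$\varphi(0;x_k)+\psi(0;x_k)-\big(\varphi(s_k;x_k)+\psi(s_k;x_k)\big)\ \ge\ \tfrac12(1-\theta_1)\theta_2^{-2}\nu_k^{-1}\|s_k\|^2.$$
   Context: Setting. $f:\mathbb{R}^n\to\mathbb{R}$ is continuously differentiable, $h:\mathbb{R}^n\to\mathbb{R}\cup\{+\infty\}$ is proper and lower semicontinuous; the problem is $\min_x f(x)+h(x)$. $\|\cdot\|$ is the Euclidean norm (spectral norm for matrices). For each $x$, approximations $\hat f(x)\in\mathbb{R}$ of $f(x)$ and $\hat\nabla f(x)\in\mathbb{R}^n$ of $\nabla f(x)$ are available. For each $x$, $\psi(\cdot;x):\mathbb{R}^n\to\mathbb{R}\cup\{+\infty\}$ is proper, lsc, satisfies $\psi(0;x)=h(x)$ and $\partial\psi(0;x)\subseteq\partial h(x)$ ($\partial$ = limiting subdifferential), and is uniformly prox-bounded: there is $\lambda>0$ such that for every $x$ and every $0<\lambda'<\lambda$, $w\mapsto\psi(w;x)+\tfrac{1}{2\lambda'}\|w\|^2$ is bounded below. Models: $\varphi_{\mathrm{cp}}(s;x)=\hat f(x)+\hat\nabla f(x)^Ts$; $m_{\mathrm{cp}}(s;x,\nu^{-1})=\varphi_{\mathrm{cp}}(s;x)+\tfrac12\nu^{-1}\|s\|^2+\psi(s;x)$; for a symmetric $B(x)\in\mathbb{R}^{n\times n}$, $\varphi(s;x)=\hat f(x)+\hat\nabla f(x)^Ts+\tfrac12 s^TB(x)s$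 and $m(s;x,\sigma)=\varphi(s;x)+\tfrac12\sigma\|s\|^2+\psi(s;x)$. Algorithm iR2N. Constants: $\kappa_f,\kappa_\nabla>0$, $0<\gamma_3\le 1<\gamma_1\le\gamma_2$, $0<\hat\eta_1\le\hat\eta_2<1$, $0<\theta_1<1<\theta_2$, $\sigma_{\min}>4\kappa_f\theta_1\theta_2^2/(\hat\eta_1(1-\theta_1))$, $\sigma_0\ge\sigma_{\min}$, $x_0\in\mathbb{R}^n$. At iteration $k=0,1,\dots$: choose symmetric $B_k=B(x_k)$; set $\nu_k=\theta_1/(\|B_k\|+\sigma_k)$; compute $\hat s_{k,\mathrm{cp}}$ with $m_{\mathrm{cp}}(\hat s_{k,\mathrm{cp}};x_k,\nu_k^{-1})\le m_{\mathrm{cp}}(0;x_k,\nu_k^{-1})$ (an approximate minimizer of $m_{\mathrm{cp}}(\cdot;x_k,\nu_k^{-1})$ obtained by a descent procedure from $s=0$) and set $\hat\xi_{k,\mathrm{cp}}=(\varphi_{\mathrm{cp}}+\psi)(0;x_k)-(\varphi_{\mathrm{cp}}+\psi)(\hat s_{k,\mathrm{cp}};x_k)$; compute $s_k$ with $m(s_k;x_k,\sigma_k)\le m(\hat s_{k,\mathrm{cp}};x_k,\sigma_k)$; if $\|s_k\|>\theta_2\|\hat s_{k,\mathrm{cp}}\|$, reset $s_k=\hat s_{k,\mathrm{cp}}$ (these computations are repeated with refined $\hat f,\hat\nabla f$ until the inexactness bounds (A6) hold: $|f(x_k)-\hat f(x_k)|\le\kappa_f\|s_k\|^2$, $|f(x_k+s_k)-\hat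 f(x_k+s_k)|\le\kappa_f\|s_k\|^2$, $\|\nabla f(x_k)-\hat\nabla f(x_k)\|\le\kappa_\nabla\|s_k\|$). Compute $$\hat\rho_k=\frac{\hat f(x_k)+h(x_k)-\hat f(x_k+s_k)-h(x_k+s_k)}{\varphi(0;x_k)+\psi(0;x_k)-\varphi(s_k;x_k)-\psi(s_k;x_k)},$$ where $\varphi(\cdot;x_k)$ uses $B_k$. If $\hat\rho_k\ge\hat\eta_1$ (successful) set $x_{k+1}=x_k+s_k$, else $x_{k+1}=x_k$. Choose $\sigma_{k+1}\in[\gamma_3\sigma_k,\sigma_k]$ if $\hat\rho_k\ge\hat\eta_2$ (very successful), $\sigma_{k+1}\in[\sigma_k,\gamma_1\sigma_k]$ if $\hat\eta_1\le\hat\rho_k<\hat\eta_2$, $\sigma_{k+1}\in[\gamma_1\sigma_k,\gamma_2\sigma_k]$ if $\hat\rho_k<\hat\eta_1$; then reset $\sigma_{k+1}=\max(\sigma_{k+1},\sigma_{\min})$. (A4): for all $k$, $\varphi(0;x_k)+\psi(0;x_k)-(\varphi(s_k;x_k)+\psi(s_k;x_k))\ge(1-\theta_1)\hat\xi_{k,\mathrm{cp}}$. *)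

theory Defs
  imports "HOL-Analysis.Analysis" "HOL-Library.Extended_Real"
begin

definition proper_fn :: "('a \<Rightarrow> ereal) \<Rightarrow> bool" where
  "proper_fn g \<longleftrightarrow> (\<forall>x. g x \<noteq> -\<infinity>) \<and> (\<exists>x. g x \<noteq> \<infinity>)"

definition lsc_fn :: "('a::topological_space \<Rightarrow> ereal) \<Rightarrow> bool" where
  "lsc_fn g \<longleftrightarrow> (\<forall>x c. c < g x \<longrightarrow> eventually (\<lambda>y. c < g y) (at x))"

definition frechet_subdiff :: "('a::real_inner \<Rightarrow> ereal) \<Rightarrow> 'a \<Rightarrow> 'a set" where
  "frechet_subdiff g x = {v. \<bar>g x\<bar> \<noteq> \<infinity> \<and>
     (\<forall>\<epsilon>>0. \<exists>\<delta>>0. \<forall>y. norm (y - x) < \<delta> \<longrightarrow>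
        g x + ereal (v \<bullet> (y - x)) - ereal (\<epsilon> * norm (y - x)) \<le> g y)}"

definition limiting_subdiff :: "('a::real_inner \<Rightarrow> ereal) \<Rightarrow> 'a \<Rightarrow> 'a set" where
  "limiting_subdiff g x = {v. \<exists>xs vs. xs \<longlonglongrightarrow> x \<and> vs \<longlonglongrightarrow> v \<and>
     (\<lambda>k. g (xs k)) \<longlonglongrightarrow> g x \<and> (\<forall>k. vs k \<in> frechet_subdiff g (xs k))}"

text \<open>f is C^1 with gradient gradf; h proper lsc; psi x w stands for psi(w;x).\<close>
definition iR2N_setting ::
  "(real^'n \<Rightarrow> real) \<Rightarrow> (real^'n \<Rightarrow> real^'n) \<Rightarrow> (real^'n \<Rightarrow> ereal)
   \<Rightarrow> (real^'n \<Rightarrow> real^'n \<Rightarrow> ereal) \<Rightarrow> bool" where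
  "iR2N_setting f gradf h psi \<longleftrightarrow>
     (\<forall>x. (f has_derivative (\<lambda>d. gradf x \<bullet> d)) (at x)) \<and> continuous_on UNIV gradf \<and>
     proper_fn h \<and> lsc_fn h \<and>
     (\<forall>x. proper_fn (psi x) \<and> lsc_fn (psi x) \<and> psi x 0 = h x \<and>
          limiting_subdiff (psi x) 0 \<subseteq> limiting_subdiff h x) \<and>
     (\<exists>lam>0. \<forall>x lam'. 0 < lam' \<and> lam' < lam \<longrightarrow>
          (\<exists>b::real. \<forall>w. ereal b \<le> psi x w + ereal (norm w ^ 2 / (2 * lam'))))"

definition phi_cp :: "real \<Rightarrow> real^'n \<Rightarrow> real^'n \<Rightarrow> real" where
  "phi_cp fh gh s = fh + gh \<bullet> s"

definition m_cp :: "real \<Rightarrow> real^'n \<Rightarrow> (real^'n \<Rightarrow> ereal) \<Rightarrow> real \<Rightarrow> real^'n \<Rightarrow> ereal" where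
  "m_cp fh gh ps nuinv s = ereal (phi_cp fh gh s + nuinv / 2 * norm s ^ 2) + ps s"

definition phi_q :: "real \<Rightarrow> real^'n \<Rightarrow> real^'n^'n \<Rightarrow> real^'n \<Rightarrow> real" where
  "phi_q fh gh B s = fh + gh \<bullet> s + 1/2 * (s \<bullet> (B *v s))"

definition m_q :: "real \<Rightarrow> real^'n \<Rightarrow> real^'n^'n \<Rightarrow> (real^'n \<Rightarrow> ereal) \<Rightarrow> real \<Rightarrow> real^'n \<Rightarrow> ereal" where
  "m_q fh gh B ps \<sigma> s = ereal (phi_q fh gh B s + \<sigma> / 2 * norm s ^ 2) + ps s"

text \<open>nu_k = theta1 / (||B_k|| + sigma_k), spectral norm = operator norm.\<close>
definition iR2N_nu :: "real \<Rightarrow> real^'n^'n \<Rightarrow> real \<Rightarrow> real" where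
  "iR2N_nu \<theta>1 B \<sigma> = \<theta>1 / (onorm (\<lambda>v. B *v v) + \<sigma>)"

definition model_decr :: "real \<Rightarrow> real^'n \<Rightarrow> real^'n^'n \<Rightarrow> (real^'n \<Rightarrow> ereal) \<Rightarrow> real^'n \<Rightarrow> ereal" where
  "model_decr fh gh B ps s = (ereal (phi_q fh gh B 0) + ps 0) - (ereal (phi_q fh gh B s) + ps s)"

definition xi_cp :: "real \<Rightarrow> real^'n \<Rightarrow> (real^'n \<Rightarrow> ereal) \<Rightarrow> real^'n \<Rightarrow> ereal" where
  "xi_cp fh gh ps s = (ereal (phi_cp fh gh 0) + ps 0) - (ereal (phi_cp fh gh s) + ps s)"

text \<open>At iteration k: fhx k = fhat(x_k), fhxs k = fhat(x_k+s_k), gh k = nabla-hat f(x_k)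
  (the final, refined estimates), scp k = hat s_{k,cp}, st k = the step before the safeguard reset,
  s k = the final step.\<close>
definition iR2N_run ::
  "(real^'n \<Rightarrow> real) \<Rightarrow> (real^'n \<Rightarrow> real^'n) \<Rightarrow> (real^'n \<Rightarrow> ereal) \<Rightarrow> (real^'n \<Rightarrow> real^'n \<Rightarrow> ereal)
   \<Rightarrow> real \<Rightarrow> real \<Rightarrow> real \<Rightarrow> real \<Rightarrow> real \<Rightarrow> real \<Rightarrow> real \<Rightarrow> real \<Rightarrow> real \<Rightarrow> real
   \<Rightarrow> (nat \<Rightarrow> real^'n) \<Rightarrow> (nat \<Rightarrow> real^'n^'n) \<Rightarrow> (nat \<Rightarrow> real)
   \<Rightarrow> (nat \<Rightarrow> real) \<Rightarrow> (nat \<Rightarrow> real) \<Rightarrow> (nat \<Rightarrow> real^'n)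
   \<Rightarrow> (nat \<Rightarrow> real^'n) \<Rightarrow> (nat \<Rightarrow> real^'n) \<Rightarrow> (nat \<Rightarrow> real^'n) \<Rightarrow> bool" where
  "iR2N_run f gradf h psi \<kappa>f \<kappa>g \<gamma>1 \<gamma>2 \<gamma>3 \<eta>1 \<eta>2 \<theta>1 \<theta>2 \<sigma>min
      x B \<sigma> fhx fhxs gh scp st s \<longleftrightarrow>
    0 < \<kappa>f \<and> 0 < \<kappa>g \<and> 0 < \<gamma>3 \<and> \<gamma>3 \<le> 1 \<and> 1 < \<gamma>1 \<and> \<gamma>1 \<le> \<gamma>2 \<and>
    0 < \<eta>1 \<and> \<eta>1 \<le> \<eta>2 \<and> \<eta>2 < 1 \<and> 0 < \<theta>1 \<and> \<theta>1 < 1 \<and> 1 < \<theta>2 \<and>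
    \<sigma>min > 4 * \<kappa>f * \<theta>1 * \<theta>2 ^ 2 / (\<eta>1 * (1 - \<theta>1)) \<and> \<sigma> 0 \<ge> \<sigma>min \<and>
    (\<forall>k. let \<nu> = iR2N_nu \<theta>1 (B k) (\<sigma> k);
             \<rho> = (ereal (fhx k) + h (x k) - ereal (fhxs k) - h (x k + s k)) /
                 model_decr (fhx k) (gh k) (B k) (psi (x k)) (s k) in
       transpose (B k) = B k \<and>
       m_cp (fhx k) (gh k) (psi (x k)) (1 / \<nu>) (scp k) \<le> m_cp (fhx k) (gh k) (psi (x k)) (1 / \<nu>) 0 \<and>
       m_q (fhx k) (gh k) (B k) (psi (x k)) (\<sigma> k) (st k) \<le>
         m_q (fhx k) (gh k) (B k) (psi (x k)) (\<sigma> k) (scp k) \<and>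
       s k = (if norm (st k) > \<theta>2 * norm (scp k) then scp k else st k) \<and>
       \<bar>f (x k) - fhx k\<bar> \<le> \<kappa>f * norm (s k) ^ 2 \<and>
       \<bar>f (x k + s k) - fhxs k\<bar> \<le> \<kappa>f * norm (s k) ^ 2 \<and>
       norm (gradf (x k) - gh k) \<le> \<kappa>g * norm (s k) \<and>
       x (Suc k) = (if \<rho> \<ge> ereal \<eta>1 then x k + s k else x k) \<and>
       (\<exists>\<sigma>'. (if \<rho> \<ge> ereal \<eta>2 then \<gamma>3 * \<sigma> k \<le> \<sigma>' \<and> \<sigma>' \<le> \<sigma> k
              else if \<rho> \<ge> ereal \<eta>1 then \<sigma> k \<le> \<sigma>' \<and> \<sigma>' \<le> \<gamma>1 * \<sigma> k
              else \<gamma>1 * \<sigma> k \<le> \<sigma>' \<and> \<sigma>' \<le> \<gamma>2 * \<sigma> k) \<and>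
            \<sigma> (Suc k) = max \<sigma>' \<sigma>min))"

end

theory Submission
  imports Defs
begin

text \<open>Since the Cauchy step does not increase the regularised model m_cp, the decrease
  xi_cp of the linear model plus psi along it is at least its regularisation term
  nu^-1/2 |s_cp|^2. The safeguard gives |s| \<le> theta2 |s_cp|, and (A4) transfers the bound
  to the quadratic model along the final step s.\<close>

lemma xi_cp_ge_of_m_cp_le:
  assumes "ps 0 \<noteq> -\<infinity>" and "ps s \<noteq> -\<infinity>"
    and "m_cp fh gh ps c s \<le> m_cp fh gh ps c 0"
  shows "ereal (c / 2 * norm s ^ 2) \<le> xi_cp fh gh ps s"
  using assms by (cases "ps 0"; cases "ps s") (auto simp: m_cp_def xi_cp_def phi_cp_def)

lemma norm_safeguarded_step_le:
  fixes a b :: "'a::real_normed_vector"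
  assumes "1 \<le> \<theta>"
  shows "norm (if norm a > \<theta> * norm b then b else a) \<le> \<theta> * norm b"
  using assms by (auto simp: mult_le_cancel_right1)

lemma iR2N_nu_pos:
  assumes "0 < \<theta>1" and "0 < \<sigma>"
  shows "0 < iR2N_nu \<theta>1 B \<sigma>"
proof -
  have "0 \<le> onorm (\<lambda>v. B *v v)"
    by (rule onorm_pos_le) (simp add: matrix_vector_mul_bounded_linear)
  then show ?thesis
    using assms unfolding iR2N_nu_def by simp
qed

lemma iR2N_run_sigma_min_pos:
  assumes "iR2N_run f gradf h psi \<kappa>f \<kappa>g \<gamma>1 \<gamma>2 \<gamma>3 \<eta>1 \<eta>2 \<theta>1 \<theta>2 \<sigma>min
             x B \<sigma> fhx fhxs gh scp st s"
  shows "0 < \<sigma>min"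
proof -
  have "0 < \<kappa>f" "0 < \<eta>1" "0 < \<theta>1" "\<theta>1 < 1"
    and "\<sigma>min > 4 * \<kappa>f * \<theta>1 * \<theta>2 ^ 2 / (\<eta>1 * (1 - \<theta>1))"
    using assms unfolding iR2N_run_def by auto
  moreover have "0 \<le> 4 * \<kappa>f * \<theta>1 * \<theta>2 ^ 2 / (\<eta>1 * (1 - \<theta>1))"
    using calculation by simp
  ultimately show ?thesis
    by linarith
qed

lemma iR2N_run_sigma_ge_min:
  assumes "iR2N_run f gradf h psi \<kappa>f \<kappa>g \<gamma>1 \<gamma>2 \<gamma>3 \<eta>1 \<eta>2 \<theta>1 \<theta>2 \<sigma>min
             x B \<sigma> fhx fhxs gh scp st s"
  shows "\<sigma>min \<le> \<sigma> k"
proof (cases k)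
  case 0
  then show ?thesis
    using assms unfolding iR2N_run_def by simp
next
  case (Suc j)
  from assms obtain \<sigma>' where "\<sigma> (Suc j) = max \<sigma>' \<sigma>min"
    unfolding iR2N_run_def Let_def by meson
  then show ?thesis
    using Suc by simp
qed

lemma scaled_sq_norm_le_of_cauchy_bound:
  fixes s t :: "'a::real_normed_vector" and \<Delta> \<xi> :: ereal
  assumes "ereal (1 - \<theta>1) * \<xi> \<le> \<Delta>" and "ereal (c / 2 * norm t ^ 2) \<le> \<xi>"
    and "norm s \<le> \<theta>2 * norm t" and "\<theta>1 \<le> 1" and "0 < \<theta>2" and "0 \<le> c"
  shows "ereal (1/2 * (1 - \<theta>1) * inverse (\<theta>2 ^ 2) * c * norm s ^ 2) \<le> \<Delta>"
proof -
  have "norm s ^ 2 \<le> \<theta>2 ^ 2 * norm t ^ 2"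
    using assms(3) by (metis norm_ge_zero power_mono power_mult_distrib)
  then have "1/2 * (1 - \<theta>1) * inverse (\<theta>2 ^ 2) * c * norm s ^ 2
               \<le> 1/2 * (1 - \<theta>1) * inverse (\<theta>2 ^ 2) * c * (\<theta>2 ^ 2 * norm t ^ 2)"
    using assms(4-6) by (intro mult_left_mono) auto
  also have "\<dots> = (1 - \<theta>1) * (c / 2 * norm t ^ 2)"
    using assms(5) by (simp add: field_simps)
  finally have "ereal (1/2 * (1 - \<theta>1) * inverse (\<theta>2 ^ 2) * c * norm s ^ 2)
                  \<le> ereal (1 - \<theta>1) * ereal (c / 2 * norm t ^ 2)"
    by simp
  also have "\<dots> \<le> ereal (1 - \<theta>1) * \<xi>"
    using assms(2,4) by (intro ereal_mult_left_mono) auto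
  finally show ?thesis
    using assms(1) by simp
qed

theorem lemma3p2:
  fixes f :: "real^'n \<Rightarrow> real" and gradf :: "real^'n \<Rightarrow> real^'n"
    and h :: "real^'n \<Rightarrow> ereal" and psi :: "real^'n \<Rightarrow> real^'n \<Rightarrow> ereal"
    and \<kappa>f \<kappa>g \<gamma>1 \<gamma>2 \<gamma>3 \<eta>1 \<eta>2 \<theta>1 \<theta>2 \<sigma>min :: real
    and x :: "nat \<Rightarrow> real^'n" and B :: "nat \<Rightarrow> real^'n^'n" and \<sigma> :: "nat \<Rightarrow> real"
    and fhx fhxs :: "nat \<Rightarrow> real" and gh scp st s :: "nat \<Rightarrow> real^'n"
  assumes setting: "iR2N_setting f gradf h psi"
    and run: "iR2N_run f gradf h psi \<kappa>f \<kappa>g \<gamma>1 \<gamma>2 \<gamma>3 \<eta>1 \<eta>2 \<theta>1 \<theta>2 \<sigma>min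
                x B \<sigma> fhx fhxs gh scp st s"
    and A4: "\<forall>k. model_decr (fhx k) (gh k) (B k) (psi (x k)) (s k) \<ge>
                 ereal (1 - \<theta>1) * xi_cp (fhx k) (gh k) (psi (x k)) (scp k)"
  shows "\<forall>k. model_decr (fhx k) (gh k) (B k) (psi (x k)) (s k) \<ge>
             ereal (1/2 * (1 - \<theta>1) * inverse (\<theta>2 ^ 2) * inverse (iR2N_nu \<theta>1 (B k) (\<sigma> k))
                    * norm (s k) ^ 2)"
proof
  fix k
  define \<nu> where "\<nu> = iR2N_nu \<theta>1 (B k) (\<sigma> k)"
  have \<theta>: "0 < \<theta>1" "\<theta>1 < 1" "1 < \<theta>2"
    using run unfolding iR2N_run_def by auto
  have cauchy: "m_cp (fhx k) (gh k) (psi (x k)) (1 / \<nu>) (scp k)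
                  \<le> m_cp (fhx k) (gh k) (psi (x k)) (1 / \<nu>) 0"
    and safeguard: "s k = (if norm (st k) > \<theta>2 * norm (scp k) then scp k else st k)"
    using run unfolding iR2N_run_def Let_def \<nu>_def by blast+
  have "0 < \<nu>"
    unfolding \<nu>_def using \<theta> iR2N_run_sigma_min_pos[OF run] iR2N_run_sigma_ge_min[OF run, of k]
    by (intro iR2N_nu_pos) auto
  have "\<And>w. psi (x k) w \<noteq> -\<infinity>"
    using setting unfolding iR2N_setting_def proper_fn_def by blast
  then have xi: "ereal (inverse \<nu> / 2 * norm (scp k) ^ 2) \<le> xi_cp (fhx k) (gh k) (psi (x k)) (scp k)"
    using xi_cp_ge_of_m_cp_le[OF _ _ cauchy] by (simp add: inverse_eq_divide)
  have "norm (s k) \<le> \<theta>2 * norm (scp k)"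
    unfolding safeguard using \<theta> by (intro norm_safeguarded_step_le) simp
  then show "model_decr (fhx k) (gh k) (B k) (psi (x k)) (s k) \<ge>
      ereal (1/2 * (1 - \<theta>1) * inverse (\<theta>2 ^ 2) * inverse (iR2N_nu \<theta>1 (B k) (\<sigma> k))
             * norm (s k) ^ 2)"
    unfolding \<nu>_def[symmetric] using A4 xi \<theta> \<open>0 < \<nu>\<close>
    by (intro scaled_sq_norm_le_of_cauchy_bound[where \<xi> = "xi_cp (fhx k) (gh k) (psi (x k)) (scp k)"]) auto
qed

end
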